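(* Let $A=(a_{ij})$ be a real $n\times n$ matrix with nonnegative entries, $\mathbf 1=(1,\ldots,1)^{\mathrm T}$, $L=\operatorname{diag}(A\mathbf 1)-A$, $P=I-\tau L$ with $0<\tau\le\bigl(\max_i\sum_{j\neq i}a_{ij}\bigr)^{-1}$, and let $S$ be the orthogonal projection of $\mathbb R^n$ onto $\mathcal R(L)\oplus\operatorname{span}(\mathbf 1)$. Then $(PS)^k=P^kS$ for every $k=1,2,\ldots$.
   Context: $\mathcal R(L)$ denotes the range of $L$; $I$ is the identity matrix. *)

theory Defs
  imports "HOL-Analysis.Analysis"
begin

fun matpow :: "real^'n^'n \<Rightarrow> nat \<Rightarrow> real^'n^'n" where
  "matpow M 0 = mat 1"
| "matpow M (Suc k) = M ** matpow M k"

definition diag_mat :: "real^'n \<Rightarrow> real^'n^'n" where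
  "diag_mat d = (\<chi> i j. if i = j then d $ i else 0)"

definition col_range :: "real^'n^'m \<Rightarrow> (real^'m) set" where
  "col_range M = range (\<lambda>x. M *v x)"

definition is_orth_proj :: "real^'n^'n \<Rightarrow> (real^'n) set \<Rightarrow> bool" where
  "is_orth_proj S V \<longleftrightarrow> (\<forall>x. S *v x \<in> V \<and> (\<forall>v\<in>V. inner (x - S *v x) v = 0))"

end

theory Submission
  imports Defs
begin

text \<open>
  Only one property of \<open>P = I - \<tau>L\<close> matters: it maps \<open>V = \<R>(L) + span {\<one>}\<close> into itself,
  because \<open>P v = v - \<tau> L v\<close> and \<open>L v \<in> \<R>(L)\<close>. Hence every \<open>P^k\<close> leaves \<open>V\<close> invariant, and
  since \<open>S\<close> fixes \<open>V\<close> pointwise, \<open>S P^k S = P^k S\<close>; induction on \<open>k\<close> then gives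
  \<open>(PS)^(k+1) = P (S P^k S) = P^(k+1) S\<close>.
\<close>

lemma orth_proj_in_subspace:
  assumes "is_orth_proj S V"
  shows "S *v x \<in> V"
  using assms unfolding is_orth_proj_def by blast

lemma orth_proj_fixes:
  assumes "is_orth_proj S V" "subspace V" "v \<in> V"
  shows "S *v v = v"
proof -
  have "v - S *v v \<in> V"
    using assms orth_proj_in_subspace[OF assms(1)] by (simp add: subspace_diff)
  then have "inner (v - S *v v) (v - S *v v) = 0"
    using assms(1) unfolding is_orth_proj_def by blast
  then show ?thesis by simp
qed

lemma matpow_invariant:
  assumes "\<And>v. v \<in> V \<Longrightarrow> P *v v \<in> V" "v \<in> V"
  shows "matpow P k *v v \<in> V"
  using assms(2)
proof (induction k arbitrary: v)
  case 0
  then show ?case by simp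
next
  case (Suc k)
  then show ?case
    using assms(1) by (simp add: matrix_vector_mul_assoc[symmetric])
qed

lemma orth_proj_absorbs_invariant:
  assumes S: "is_orth_proj S V" and V: "subspace V"
    and M: "\<And>v. v \<in> V \<Longrightarrow> M *v v \<in> V"
  shows "S ** M ** S = M ** S"
proof -
  have "(S ** M ** S) *v x = (M ** S) *v x" for x
    using orth_proj_fixes[OF S V M[OF orth_proj_in_subspace[OF S]]]
    by (simp add: matrix_vector_mul_assoc[symmetric])
  then show ?thesis by (simp add: matrix_eq)
qed

lemma matpow_mult_orth_proj:
  assumes S: "is_orth_proj S V" and V: "subspace V"
    and P: "\<And>v. v \<in> V \<Longrightarrow> P *v v \<in> V"
  shows "matpow (P ** S) (Suc k) = matpow P (Suc k) ** S"
proof (induction k)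
  case 0
  then show ?case by simp
next
  case (Suc k)
  have "matpow (P ** S) (Suc (Suc k)) = P ** (S ** matpow P (Suc k) ** S)"
    using Suc by (simp add: matrix_mul_assoc)
  also have "\<dots> = P ** (matpow P (Suc k) ** S)"
    using orth_proj_absorbs_invariant[OF S V matpow_invariant[of V P]] P by metis
  also have "\<dots> = matpow P (Suc (Suc k)) ** S"
    by (simp add: matrix_mul_assoc)
  finally show ?case .
qed

lemma subspace_col_range: "subspace (col_range M)"
  unfolding col_range_def
  by (intro linear_subspace_image subspace_UNIV) (simp add: matrix_vector_mul_linear)

lemma subspace_col_range_plus_span:
  "subspace {u + w | u w. u \<in> col_range M \<and> w \<in> span B}"
  by (intro subspace_sums subspace_col_range subspace_span)

lemma mult_in_col_range_plus_span:
  "M *v v \<in> {u + w | u w. u \<in> col_range M \<and> w \<in> span B}"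
  unfolding col_range_def using span_zero by force

lemma identity_minus_scaled_invariant:
  assumes "v \<in> {u + w | u w. u \<in> col_range M \<and> w \<in> span B}"
  shows "(mat 1 - c *\<^sub>R M) *v v \<in> {u + w | u w. u \<in> col_range M \<and> w \<in> span B}"
proof -
  have "(mat 1 - c *\<^sub>R M) *v v = v - c *\<^sub>R (M *v v)"
    by (simp add: matrix_vector_mult_diff_rdistrib scaleR_matrix_vector_assoc)
  then show ?thesis
    using subspace_diff[OF subspace_col_range_plus_span assms
        subspace_scale[OF subspace_col_range_plus_span mult_in_col_range_plus_span]]
    by simp
qed

theorem lemmaA1:
  fixes A S :: "real^'n^'n" and \<tau> :: real
  assumes nonneg: "\<forall>i j. A $ i $ j \<ge> 0"
    and tau_pos: "0 < \<tau>"
    and tau_le: "\<tau> * (MAX i. \<Sum>j\<in>UNIV - {i}. A $ i $ j) \<le> 1"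
    and S_proj: "is_orth_proj S
        {u + w | u w. u \<in> col_range (diag_mat (A *v (\<chi> i. 1)) - A) \<and> w \<in> span {(\<chi> i. 1)}}"
  shows "\<forall>k\<ge>1. matpow ((mat 1 - \<tau> *\<^sub>R (diag_mat (A *v (\<chi> i. 1)) - A)) ** S) k
              = matpow (mat 1 - \<tau> *\<^sub>R (diag_mat (A *v (\<chi> i. 1)) - A)) k ** S"
proof (intro allI impI)
  fix k :: nat
  assume "k \<ge> 1"
  then obtain m where "k = Suc m"
    using not0_implies_Suc by fastforce
  then show "matpow ((mat 1 - \<tau> *\<^sub>R (diag_mat (A *v (\<chi> i. 1)) - A)) ** S) k
              = matpow (mat 1 - \<tau> *\<^sub>R (diag_mat (A *v (\<chi> i. 1)) - A)) k ** S"
    using matpow_mult_orth_proj[OF S_proj subspace_col_range_plus_span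
        identity_minus_scaled_invariant]
    by simp
qed

end
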